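(* Let $n,q\in\mathbb{N}$ with $2\le q<n$ and let $0<\varepsilon<1$. Put $t_1=\lfloor\frac{n-q}{2}\rfloor-\lceil\log_2\frac1\varepsilon\rceil-2$ and $t_2=\lceil\frac{n-q}{2}\rceil+\lceil\log_2\frac1\varepsilon\rceil+2$. Then $$\sum_{c=\max\{0,t_1\}}^{\min\{t_2,n-q\}}\binom{n-q}{c}\big(2^{\,n-c-q}-1\big)^{c}\;\ge\;(1-\varepsilon)\sum_{c=0}^{n-q}\binom{n-q}{c}\big(2^{\,n-c-q}-1\big)^{c}.$$
   Context: Standard notation; $\log_2$ is the base-2 logarithm and $0^0=1$. *)

theory Defs
  imports "HOL-Analysis.Analysis"
begin

end

theory Submission
  imports Defs
begin

(* Write m = n - q, c0 = m div 2 and f c = (m choose c) (2^(m-c) - 1)^c.  Then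
   f c <= (m choose c0) 2^(c(m-c)), while Bernoulli's inequality gives
   f c0 >= (m choose c0) 2^(c0(m-c0)) / 2.  The exponent c(m-c) falls below its maximum
   c0(m-c0) quadratically in the distance d from c0, so outside [t1, t2]
   f c <= f c0 2^(-K-2-d) with 2^K >= 1/eps; the two geometric tails add up to at most
   f c0 / 2^K <= eps * f c0. *)

lemma double_le_power_two: "2 * n \<le> (2::nat) ^ n"
proof (induction n)
  case (Suc n)
  then show ?case by (cases n) simp_all
qed simp

lemma power_two_minus_one_power_ge:
  assumes "2 * k \<le> (2::nat) ^ s"
  shows "(2::real) ^ (s * k) / 2 \<le> (2 ^ s - 1) ^ k"
proof -
  have "1 / 2 \<le> 1 + real k * (- 1 / 2 ^ s)"
    using of_nat_mono[OF assms] by (simp add: field_simps)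
  also have "\<dots> \<le> (1 - 1 / 2 ^ s) ^ k"
    using Bernoulli_inequality[of "- 1 / 2 ^ s" k] by simp
  finally have "(2::real) ^ (s * k) * (1 / 2) \<le> (2 ^ s) ^ k * (1 - 1 / 2 ^ s) ^ k"
    by (simp add: power_mult)
  also have "\<dots> = (2 ^ s - 1) ^ k"
    by (simp add: power_mult_distrib[symmetric] field_simps)
  finally show ?thesis by simp
qed

lemma exponent_gap_below_middle:
  fixes m c c0 r K :: nat
  assumes "m = 2 * c0 + r" "c + K + 3 \<le> c0"
  shows "c * (m - c) + (K + 3 + (c0 - c) + r) \<le> c0 * (m - c0)"
proof -
  obtain d where d: "c0 = c + d" and dK: "K + 3 \<le> d"
    using assms(2) by (metis add.assoc le_add1 le_add_diff_inverse)
  have "K + 3 + d \<le> (K + 3) * d" using dK by (simp add: algebra_simps)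
  also have "\<dots> \<le> d * d" using dK by simp
  moreover have "r \<le> d * r" using dK by simp
  ultimately have "K + 3 + d + r \<le> d * (d + r)" unfolding distrib_left by linarith
  moreover have "c0 * (m - c0) = c * (m - c) + d * (d + r)"
    using assms(1) d by (simp add: algebra_simps)
  ultimately show ?thesis using d by simp
qed

lemma exponent_gap_above_middle:
  fixes m c c0 r K :: nat
  assumes "m = 2 * c0 + r" "c0 + r + K + 3 \<le> c" "c \<le> m"
  shows "c * (m - c) + (K + 3 + (c - c0)) \<le> c0 * (m - c0)"
proof -
  have "(m - c) * (m - (m - c)) + (K + 3 + (c0 - (m - c)) + r) \<le> c0 * (m - c0)"
    using assms by (intro exponent_gap_below_middle) auto
  moreover have "(m - c) * (m - (m - c)) = c * (m - c)" and "c0 - (m - c) + r = c - c0"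
    using assms by auto
  ultimately show ?thesis by simp
qed

lemma sum_half_power_inj_le:
  assumes "finite A" "inj_on g A"
  shows "(\<Sum>x\<in>A. (1 / 2 :: real) ^ g x) \<le> 2"
proof -
  have "(\<Sum>x\<in>A. (1 / 2 :: real) ^ g x) = (\<Sum>i\<in>g ` A. (1 / 2) ^ i)"
    using assms(2) by (simp add: sum.reindex)
  also have "\<dots> \<le> (\<Sum>i. (1 / 2) ^ i)"
    using assms(1) by (intro sum_le_suminf summable_geometric) auto
  also have "\<dots> = 2" by (simp add: suminf_geometric)
  finally show ?thesis .
qed

lemma inverse_power_ceiling_log_le:
  fixes \<epsilon> :: real
  assumes "0 < \<epsilon>"
  shows "1 / 2 ^ nat \<lceil>log 2 (1 / \<epsilon>)\<rceil> \<le> \<epsilon>"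
proof -
  have "1 / \<epsilon> = 2 powr log 2 (1 / \<epsilon>)" using assms by simp
  also have "\<dots> \<le> 2 powr nat \<lceil>log 2 (1 / \<epsilon>)\<rceil>"
    by (intro powr_mono) linarith+
  finally show ?thesis using assms by (simp add: powr_realpow field_simps)
qed

lemma ceiling_half_of_nat: "\<lceil>real m / 2\<rceil> = int (m div 2 + m mod 2)"
  by (cases "even m") (auto elim!: evenE oddE simp: ceiling_eq_iff)

definition binom_power_term :: "nat \<Rightarrow> nat \<Rightarrow> real" where
  "binom_power_term m c = real (m choose c) * (2 ^ (m - c) - 1) ^ c"

lemma binom_power_term_nonneg: "0 \<le> binom_power_term m c"
  unfolding binom_power_term_def by simp

lemma binom_power_term_le:
  "binom_power_term m c \<le> real (m choose (m div 2)) * 2 ^ (c * (m - c))"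
proof -
  have "((2::real) ^ (m - c) - 1) ^ c \<le> (2 ^ (m - c)) ^ c"
    by (intro power_mono) auto
  then have "((2::real) ^ (m - c) - 1) ^ c \<le> 2 ^ (c * (m - c))"
    by (simp add: power_mult[symmetric] mult.commute)
  then show ?thesis
    unfolding binom_power_term_def using binomial_maximum[of m c]
    by (intro mult_mono) auto
qed

lemma binom_power_term_middle_ge:
  "real (m choose (m div 2)) * 2 ^ (m div 2 * (m - m div 2)) / 2 \<le> binom_power_term m (m div 2)"
proof -
  have "2 * (m div 2) \<le> (2::nat) ^ (m - m div 2)"
    using double_le_power_two[of "m - m div 2"] by (simp add: mult_le_mono2 order_trans)
  then have "(2::real) ^ (m div 2 * (m - m div 2)) / 2 \<le> (2 ^ (m - m div 2) - 1) ^ (m div 2)"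
    using power_two_minus_one_power_ge by (simp add: mult.commute)
  then show ?thesis
    unfolding binom_power_term_def by (simp add: mult_left_mono)
qed

lemma binom_power_term_far_le:
  assumes "c * (m - c) + (K + 3 + d) \<le> m div 2 * (m - m div 2)"
  shows "binom_power_term m c * 2 ^ (K + 2 + d) \<le> binom_power_term m (m div 2)"
proof -
  let ?M = "real (m choose (m div 2))"
  have "binom_power_term m c * 2 ^ (K + 2 + d) \<le> ?M * 2 ^ (c * (m - c)) * 2 ^ (K + 2 + d)"
    using binom_power_term_le by (simp add: mult_right_mono)
  also have "\<dots> = ?M * 2 ^ (c * (m - c) + (K + 3 + d)) / 2"
    by (simp add: power_add)
  also have "\<dots> \<le> ?M * 2 ^ (m div 2 * (m - m div 2)) / 2"
    using assms by (intro divide_right_mono mult_left_mono power_increasing) auto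
  also have "\<dots> \<le> binom_power_term m (m div 2)"
    by (rule binom_power_term_middle_ge)
  finally show ?thesis .
qed

lemma sum_binom_power_term_far_le:
  assumes "finite C" "inj_on d C"
    and "\<And>c. c \<in> C \<Longrightarrow> c * (m - c) + (K + 3 + d c) \<le> m div 2 * (m - m div 2)"
  shows "sum (binom_power_term m) C \<le> binom_power_term m (m div 2) / 2 ^ (K + 1)"
proof -
  let ?T = "binom_power_term m (m div 2) / 2 ^ (K + 2)"
  have "binom_power_term m c \<le> ?T * (1 / 2) ^ d c" if "c \<in> C" for c
    using binom_power_term_far_le[OF assms(3)[OF that]]
    by (simp add: power_add field_simps)
  then have "sum (binom_power_term m) C \<le> (\<Sum>c\<in>C. ?T * (1 / 2) ^ d c)"
    by (rule sum_mono)
  also have "\<dots> \<le> ?T * 2"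
    unfolding sum_distrib_left[symmetric] using assms(1,2) binom_power_term_nonneg
    by (intro mult_left_mono sum_half_power_inj_le) auto
  finally show ?thesis by (simp add: field_simps)
qed

lemma sum_binom_power_term_window_ge:
  fixes \<epsilon> :: real
  assumes "a \<le> b" "b \<le> m" "1 / 2 ^ K \<le> \<epsilon>"
    and below: "\<And>c. c < a \<Longrightarrow> c + K + 3 \<le> m div 2"
    and above: "\<And>c. b < c \<Longrightarrow> c \<le> m \<Longrightarrow> m div 2 + m mod 2 + K + 3 \<le> c"
  shows "(1 - \<epsilon>) * sum (binom_power_term m) {..m} \<le> sum (binom_power_term m) {a..b}"
proof -
  let ?f = "binom_power_term m" and ?c0 = "m div 2"
  have m_eq: "m = 2 * ?c0 + m mod 2" by simp
  have "{..m} = {..<a} \<union> {a..b} \<union> {b<..m}" using assms(1,2) by auto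
  then have split: "sum ?f {..m} = sum ?f {..<a} + sum ?f {a..b} + sum ?f {b<..m}"
    using assms(1) by (simp, subst sum.union_disjoint; auto)+
  have "sum ?f {..<a} \<le> ?f ?c0 / 2 ^ (K + 1)"
  proof (rule sum_binom_power_term_far_le)
    show "inj_on (\<lambda>c. ?c0 - c) {..<a}" using below by (force simp: inj_on_def)
    show "c * (m - c) + (K + 3 + (?c0 - c)) \<le> ?c0 * (m - ?c0)" if "c \<in> {..<a}" for c
      using exponent_gap_below_middle[OF m_eq below] that by fastforce
  qed simp
  moreover have "sum ?f {b<..m} \<le> ?f ?c0 / 2 ^ (K + 1)"
  proof (rule sum_binom_power_term_far_le)
    show "inj_on (\<lambda>c. c - ?c0) {b<..m}" using above by (force simp: inj_on_def)
    show "c * (m - c) + (K + 3 + (c - ?c0)) \<le> ?c0 * (m - ?c0)" if "c \<in> {b<..m}" for c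
      using exponent_gap_above_middle[OF m_eq above, of c] that by simp
  qed simp
  ultimately have "sum ?f {..<a} + sum ?f {b<..m} \<le> 1 / 2 ^ K * ?f ?c0"
    by simp
  also have "\<dots> \<le> \<epsilon> * ?f ?c0"
    using assms(3) binom_power_term_nonneg by (rule mult_right_mono)
  also have "\<dots> \<le> \<epsilon> * sum ?f {..m}"
    using assms(3) binom_power_term_nonneg
    by (intro mult_left_mono member_le_sum) (auto intro: order_trans[rotated])
  finally show ?thesis
    using split by (simp add: algebra_simps)
qed

theorem lemma8p12:
  fixes n q :: nat and \<epsilon> :: real and t1 t2 :: int
  assumes "2 \<le> q" "q < n" "0 < \<epsilon>" "\<epsilon> < 1"
    and "t1 = \<lfloor>real (n - q) / 2\<rfloor> - \<lceil>log 2 (1 / \<epsilon>)\<rceil> - 2"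
    and "t2 = \<lceil>real (n - q) / 2\<rceil> + \<lceil>log 2 (1 / \<epsilon>)\<rceil> + 2"
  shows "(\<Sum>c\<in>{max 0 t1..min t2 (int (n - q))}.
            real ((n - q) choose nat c) * (2 ^ (n - nat c - q) - 1) ^ nat c)
         \<ge> (1 - \<epsilon>) * (\<Sum>c=0..n - q. real ((n - q) choose c) * (2 ^ (n - c - q) - 1) ^ c)"
proof -
  define m K where "m = n - q" and "K = nat \<lceil>log 2 (1 / \<epsilon>)\<rceil>"
  have "0 < log 2 (1 / \<epsilon>)" using assms(3,4) by simp
  then have "\<lceil>log 2 (1 / \<epsilon>)\<rceil> = int K" by (simp add: K_def)
  then have t1: "t1 = int (m div 2) - int K - 2"
    and t2: "t2 = int (m div 2 + m mod 2) + int K + 2"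
    using assms(5,6) floor_divide_of_nat_eq[of m 2] ceiling_half_of_nat[of m]
    by (simp_all add: m_def)
  define a b where "a = nat (max 0 t1)" and "b = nat (min t2 (int m))"
  have "{max 0 t1..min t2 (int m)} = int ` {a..b}"
    using t2 by (simp add: image_int_atLeastAtMost a_def b_def)
  then have "(\<Sum>c\<in>{max 0 t1..min t2 (int (n - q))}.
      real ((n - q) choose nat c) * (2 ^ (n - nat c - q) - 1) ^ nat c) = sum (binom_power_term m) {a..b}"
    by (simp add: sum.reindex m_def binom_power_term_def diff_commute add.commute)
  moreover have "(\<Sum>c=0..n - q. real ((n - q) choose c) * (2 ^ (n - c - q) - 1) ^ c)
      = sum (binom_power_term m) {..m}"
    by (simp add: atLeast0AtMost m_def binom_power_term_def diff_commute add.commute)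
  moreover have "(1 - \<epsilon>) * sum (binom_power_term m) {..m} \<le> sum (binom_power_term m) {a..b}"
  proof (rule sum_binom_power_term_window_ge)
    have "int (m div 2) \<le> int m" by simp
    then show "a \<le> b" unfolding a_def b_def t1 t2 by (intro nat_mono) linarith
    show "b \<le> m" by (simp add: b_def)
    show "1 / 2 ^ K \<le> \<epsilon>" unfolding K_def using assms(3) by (rule inverse_power_ceiling_log_le)
    show "c + K + 3 \<le> m div 2" if "c < a" for c using that t1 by (simp add: a_def)
    show "m div 2 + m mod 2 + K + 3 \<le> c" if "b < c" "c \<le> m" for c
      using that t2 by (simp add: b_def)
  qed
  ultimately show ?thesis by simp
qed

end
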